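(* Let $q$ be a positive integer, $0\leq\alpha<1$ and $\tau>0$. Then there exists a constant $C=C(\tau,\alpha)>0$ with the following property. Let $(a_j)_{j=q}^\infty$ be a nondecreasing sequence of positive real numbers and $$b_j=\begin{cases}\tau j^{1/\alpha}, & \alpha>0,\\ e^{\tau j}, & \alpha=0.\end{cases}$$ Suppose $j+1\leq a_j\leq b_j$ for all $j=q,q+1,q+2,\dots$. Then there exists an integer $k\geq q$ such that $$a_{k+1}-a_k\leq C(a_k-k)^{1-\alpha}.$$ *)

theory Defs
  imports Complex_Main
begin

definition bseq :: "real \<Rightarrow> real \<Rightarrow> nat \<Rightarrow> real" where
  "bseq \<tau> \<alpha> j = (if \<alpha> > 0 then \<tau> * real j powr (1 / \<alpha>) else exp (\<tau> * real j))"

end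

theory Submission
  imports Defs "HOL-Analysis.Convex"
begin

text \<open>Put \<open>d j = a j - j \<ge> 1\<close>. If every step violated the bound, then
\<open>d (k+1) - d k \<ge> c (d k) powr (1 - \<alpha>)\<close> with \<open>c\<close> as large as we like. The gauge
\<open>\<phi> x = x powr \<alpha>\<close> (\<open>\<phi> = ln\<close> for \<open>\<alpha> = 0\<close>) turns such a step into an increment
\<open>\<phi> (d (k+1)) - \<phi> (d k) \<ge> \<delta>\<close>, where \<open>\<delta>\<close> grows with \<open>c\<close>, while it turns the majorant
\<open>b j\<close> into a linear function \<open>\<rho> j\<close>. With \<open>\<delta> = 2\<rho>\<close>, after \<open>q + 1\<close> steps
\<open>\<phi> (d (2q+1)) \<ge> 2\<rho> (q+1) > \<rho> (2q+1) = \<phi> (b (2q+1))\<close>, contradicting \<open>d \<le> b\<close>.\<close>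

lemma powr_concave_tangent:
  fixes \<alpha> x y :: real
  assumes "0 \<le> \<alpha>" "\<alpha> \<le> 1" "0 < x" "0 < y"
  shows "x powr \<alpha> \<le> y powr \<alpha> + \<alpha> * y powr (\<alpha> - 1) * (x - y)"
proof -
  have young: "(x / y) powr \<alpha> * 1 powr (1 - \<alpha>) \<le> \<alpha> * (x / y) + (1 - \<alpha>) * 1"
    by (rule Youngs_inequality_0) (use assms in auto)
  have "x powr \<alpha> = (x / y) powr \<alpha> * y powr \<alpha>"
    using assms by (simp add: powr_divide)
  also have "\<dots> \<le> (\<alpha> * (x / y) + (1 - \<alpha>)) * y powr \<alpha>"
    using young by (intro mult_right_mono) auto
  also have "\<dots> = y powr \<alpha> + \<alpha> * (y powr \<alpha> / y) * (x - y)"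
    using assms by (simp add: field_simps)
  also have "y powr \<alpha> / y = y powr (\<alpha> - 1)"
    using assms by (simp add: powr_diff)
  finally show ?thesis .
qed

lemma powr_increment_ge:
  fixes \<alpha> c M x y :: real
  assumes "0 < \<alpha>" "\<alpha> \<le> 1" "1 \<le> M" "0 \<le> c" "1 \<le> x"
    and step: "c * x powr (1 - \<alpha>) \<le> y - x"
  shows "min (M powr \<alpha> - 1) (\<alpha> * c * M powr (\<alpha> - 1)) \<le> y powr \<alpha> - x powr \<alpha>"
proof (cases "y \<le> M * x")
  case True
  have "x \<le> y"
    using step assms by (smt (verit) mult_nonneg_nonneg powr_ge_zero)
  then have "\<alpha> * y powr (\<alpha> - 1) * (y - x) \<le> y powr \<alpha> - x powr \<alpha>"
    using powr_concave_tangent[of \<alpha> x y] assms by (simp add: algebra_simps)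
  moreover have "M powr (\<alpha> - 1) * x powr (\<alpha> - 1) \<le> y powr (\<alpha> - 1)"
    using True \<open>x \<le> y\<close> assms by (auto simp flip: powr_mult intro: powr_mono2')
  then have "\<alpha> * (M powr (\<alpha> - 1) * x powr (\<alpha> - 1)) * (c * x powr (1 - \<alpha>))
      \<le> \<alpha> * y powr (\<alpha> - 1) * (y - x)"
    using step assms by (intro mult_mono mult_left_mono) auto
  moreover have "x powr (\<alpha> - 1) * x powr (1 - \<alpha>) = 1"
    using assms by (simp flip: powr_add)
  ultimately have "\<alpha> * c * M powr (\<alpha> - 1) \<le> y powr \<alpha> - x powr \<alpha>"
    by (simp add: algebra_simps)
  then show ?thesis
    by linarith
next
  case False
  have "M powr \<alpha> * x powr \<alpha> \<le> y powr \<alpha>"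
    using False assms by (auto simp flip: powr_mult intro: powr_mono2)
  moreover have "(M powr \<alpha> - 1) * 1 \<le> (M powr \<alpha> - 1) * x powr \<alpha>"
    using assms by (intro mult_left_mono) (auto simp: ge_one_powr_ge_zero)
  ultimately have "M powr \<alpha> - 1 \<le> y powr \<alpha> - x powr \<alpha>"
    by (simp add: algebra_simps)
  then show ?thesis
    by linarith
qed

lemma ln_increment_ge:
  fixes c x y :: real
  assumes "0 \<le> c" "0 < x" "c * x \<le> y - x"
  shows "ln (1 + c) \<le> ln y - ln x"
proof -
  have "0 < (1 + c) * x"
    using assms by simp
  then have "ln ((1 + c) * x) \<le> ln y"
    using assms by (subst ln_le_cancel_iff) (auto simp: algebra_simps)
  then show ?thesis
    using assms by (simp add: ln_mult)
qed

lemma telescoping_lower_bound: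
  fixes g :: "nat \<Rightarrow> real"
  assumes "\<And>k. q \<le> k \<Longrightarrow> \<delta> \<le> g (Suc k) - g k"
  shows "g q + \<delta> * real n \<le> g (q + n)"
proof (induction n)
  case (Suc n)
  then show ?case
    using assms[of "q + n"] by (simp add: algebra_simps)
qed simp

definition growth_gauge :: "real \<Rightarrow> real \<Rightarrow> real" where
  "growth_gauge \<alpha> x = (if 0 < \<alpha> then x powr \<alpha> else ln x)"

lemma growth_gauge_nonneg: "1 \<le> x \<Longrightarrow> 0 \<le> growth_gauge \<alpha> x"
  by (simp add: growth_gauge_def)

lemma growth_gauge_mono: "0 < x \<Longrightarrow> x \<le> y \<Longrightarrow> growth_gauge \<alpha> x \<le> growth_gauge \<alpha> y"
  by (auto simp: growth_gauge_def intro: powr_mono2)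

lemma growth_gauge_bseq_linear:
  assumes "0 \<le> \<alpha>" "0 < \<tau>"
  obtains \<rho> where "0 < \<rho>" "\<And>j. growth_gauge \<alpha> (bseq \<tau> \<alpha> j) = \<rho> * real j"
proof (cases "0 < \<alpha>")
  case True
  have "growth_gauge \<alpha> (bseq \<tau> \<alpha> j) = \<tau> powr \<alpha> * real j" for j
    using True assms by (simp add: growth_gauge_def bseq_def powr_mult powr_powr)
  then show ?thesis
    using that[of "\<tau> powr \<alpha>"] assms by simp
next
  case False
  then show ?thesis
    using that[of \<tau>] assms by (simp add: growth_gauge_def bseq_def)
qed

lemma growth_gauge_increment:
  fixes \<alpha> \<delta> :: real
  assumes "0 \<le> \<alpha>" "\<alpha> < 1" "0 \<le> \<delta>"
  obtains c where "1 \<le> c"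
    "\<And>x y. 1 \<le> x \<Longrightarrow> c * x powr (1 - \<alpha>) \<le> y - x \<Longrightarrow>
       \<delta> \<le> growth_gauge \<alpha> y - growth_gauge \<alpha> x"
proof (cases "0 < \<alpha>")
  case True
  define M where "M = (1 + \<delta>) powr (1 / \<alpha>)"
  define c where "c = max 1 (\<delta> * M powr (1 - \<alpha>) / \<alpha>)"
  have "M powr \<alpha> = 1 + \<delta>" "1 \<le> M"
    using True assms by (auto simp: M_def powr_powr ge_one_powr_ge_zero)
  have "\<alpha> * (\<delta> * M powr (1 - \<alpha>) / \<alpha>) * M powr (\<alpha> - 1) \<le> \<alpha> * c * M powr (\<alpha> - 1)"
    using True unfolding c_def by (intro mult_right_mono mult_left_mono) auto
  then have "\<delta> * (M powr (1 - \<alpha>) * M powr (\<alpha> - 1)) \<le> \<alpha> * c * M powr (\<alpha> - 1)"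
    using True by simp
  then have "\<delta> \<le> \<alpha> * c * M powr (\<alpha> - 1)"
    using \<open>1 \<le> M\<close> by (simp flip: powr_add)
  moreover have "\<delta> \<le> M powr \<alpha> - 1"
    using \<open>M powr \<alpha> = 1 + \<delta>\<close> by simp
  ultimately have "\<delta> \<le> min (M powr \<alpha> - 1) (\<alpha> * c * M powr (\<alpha> - 1))"
    by simp
  with powr_increment_ge[of \<alpha> M c] show ?thesis
    using that[of c] True assms \<open>1 \<le> M\<close> by (force simp: c_def growth_gauge_def)
next
  case False
  define c where "c = max 1 (exp \<delta> - 1)"
  have "\<delta> \<le> ln (1 + c)"
    by (simp add: c_def ln_ge_iff)
  with ln_increment_ge[of c] show ?thesis
    using that[of c] False assms by (force simp: c_def growth_gauge_def)
qed

text \<open>Passing from \<open>a\<close> to \<open>a j - j\<close> costs 1 per step; since \<open>c (a k - k) powr (1 - \<alpha>) \<ge> 1\<close>,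
the factor 2 absorbs it.\<close>
lemma excess_increment_ge:
  fixes a :: "nat \<Rightarrow> real"
  assumes "\<alpha> \<le> 1" "1 \<le> c" "real k + 1 \<le> a k"
    and "2 * c * (a k - real k) powr (1 - \<alpha>) < a (Suc k) - a k"
  shows "c * (a k - real k) powr (1 - \<alpha>) \<le> (a (Suc k) - real (Suc k)) - (a k - real k)"
proof -
  have "1 \<le> c * (a k - real k) powr (1 - \<alpha>)"
    using assms mult_mono[of 1 c 1] by (simp add: ge_one_powr_ge_zero)
  then show ?thesis
    using assms(4) by simp
qed

lemma slow_step_exists:
  fixes a :: "nat \<Rightarrow> real"
  assumes "0 \<le> \<alpha>" "\<alpha> < 1" "1 \<le> c" "0 < \<rho>"
    and bseq: "\<And>j. growth_gauge \<alpha> (bseq \<tau> \<alpha> j) = \<rho> * real j"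
    and increment: "\<And>x y. 1 \<le> x \<Longrightarrow> c * x powr (1 - \<alpha>) \<le> y - x \<Longrightarrow>
       2 * \<rho> \<le> growth_gauge \<alpha> y - growth_gauge \<alpha> x"
    and bounds: "\<forall>j\<ge>q. real j + 1 \<le> a j \<and> a j \<le> bseq \<tau> \<alpha> j"
  shows "\<exists>k\<ge>q. a (Suc k) - a k \<le> 2 * c * (a k - real k) powr (1 - \<alpha>)"
proof (rule ccontr)
  assume no_slow_step: "\<not> ?thesis"
  define d where "d j = a j - real j" for j
  have d_ge_1: "1 \<le> d j" if "q \<le> j" for j
    using bounds that by (force simp: d_def)
  have "c * d k powr (1 - \<alpha>) \<le> d (Suc k) - d k" if "q \<le> k" for k
  proof -
    have "2 * c * (a k - real k) powr (1 - \<alpha>) < a (Suc k) - a k"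
      using no_slow_step that by (auto simp: not_le dest: leD)
    then show ?thesis
      unfolding d_def using excess_increment_ge assms bounds that by force
  qed
  then have "2 * \<rho> \<le> growth_gauge \<alpha> (d (Suc k)) - growth_gauge \<alpha> (d k)" if "q \<le> k" for k
    using that d_ge_1 by (intro increment) auto
  then have "growth_gauge \<alpha> (d q) + 2 * \<rho> * real (q + 1) \<le> growth_gauge \<alpha> (d (q + (q + 1)))"
    by (rule telescoping_lower_bound)
  moreover have "d (q + (q + 1)) \<le> bseq \<tau> \<alpha> (q + (q + 1))"
    using bounds[rule_format, of "q + (q + 1)"] by (simp add: d_def)
  then have "growth_gauge \<alpha> (d (q + (q + 1))) \<le> \<rho> * real (q + (q + 1))"
    using d_ge_1[of "q + (q + 1)"] growth_gauge_mono bseq by (metis le_add1 less_le_trans zero_less_one)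
  moreover have "0 \<le> growth_gauge \<alpha> (d q)"
    by (simp add: d_ge_1 growth_gauge_nonneg)
  ultimately show False
    using \<open>0 < \<rho>\<close> by (simp add: algebra_simps)
qed

theorem lemma3p4:
  fixes \<tau> \<alpha> :: real
  assumes "0 \<le> \<alpha>" and "\<alpha> < 1" and "\<tau> > 0"
  shows "\<exists>C>0. \<forall>(q::nat) (a::nat \<Rightarrow> real).
           q \<ge> 1 \<longrightarrow>
           (\<forall>j\<ge>q. a j > 0) \<longrightarrow>
           (\<forall>i j. q \<le> i \<longrightarrow> i \<le> j \<longrightarrow> a i \<le> a j) \<longrightarrow>
           (\<forall>j\<ge>q. real j + 1 \<le> a j \<and> a j \<le> bseq \<tau> \<alpha> j) \<longrightarrow>
           (\<exists>k\<ge>q. a (Suc k) - a k \<le> C * (a k - real k) powr (1 - \<alpha>))"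
proof -
  obtain \<rho> where "0 < \<rho>" and bseq: "\<And>j. growth_gauge \<alpha> (bseq \<tau> \<alpha> j) = \<rho> * real j"
    using growth_gauge_bseq_linear assms by blast
  obtain c where "1 \<le> c" and increment: "\<And>x y. 1 \<le> x \<Longrightarrow> c * x powr (1 - \<alpha>) \<le> y - x \<Longrightarrow>
       2 * \<rho> \<le> growth_gauge \<alpha> y - growth_gauge \<alpha> x"
    using growth_gauge_increment[of \<alpha> "2 * \<rho>"] assms \<open>0 < \<rho>\<close> by auto
  show ?thesis
    using slow_step_exists[OF assms(1,2) \<open>1 \<le> c\<close> \<open>0 < \<rho>\<close> bseq increment]
    by (intro exI[of _ "2 * c"]) (use \<open>1 \<le> c\<close> in auto)
qed

end
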